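(* Let $H,K$ be subgroups of $IA_n$ with $H\cap K=\{1\}$ and $K$ normalizing $H$, so that $HK=H\rtimes K\subseteq IA_n$. Suppose that: (1) the semi-direct product is almost-direct, i.e. $[K,H]\subseteq[H,H]$; (2) for every $i\ge1$, the images of $\mathcal A_i\cap H$ and $\mathcal A_i\cap K$ in $\mathcal A_i/\mathcal A_{i+1}$ intersect trivially (equivalently, no element of $H$ and element of $K$ induce the same nonzero derivation of the free Lie ring through the Johnson morphism); (3) the Andreadakis equality holds for $H$ and for $K$: $\Gamma_j(H)=\mathcal A_j\cap H$ and $\Gamma_j(K)=\mathcal A_j\cap K$ for all $j\ge1$. Then the Andreadakis equality holds for $H\rtimes K$: $\Gamma_j(H\rtimes K)=\mathcal A_j\cap (H\rtimes K)$ for all $j\ge1$.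
   Context: $F_n$ is the free group on $n$ generators, $\Gamma_*$ denotes the lower central series ($\Gamma_1(G)=G$, $\Gamma_{k+1}(G)=[G,\Gamma_k(G)]$, $[x,y]=xyx^{-1}y^{-1}$). $IA_n$ is the subgroup of $\mathrm{Aut}(F_n)$ of automorphisms acting trivially on $F_n^{ab}$. The Andreadakis filtration $IA_n=\mathcal A_1\supseteq\mathcal A_2\supseteq\cdots$ is defined by: $\mathcal A_j$ is the subgroup of automorphisms acting trivially on $F_n/\Gamma_{j+1}(F_n)$, i.e. $\sigma(x)x^{-1}\in\Gamma_{j+1}(F_n)$ for all $x\in F_n$. The Johnson morphism sends the class of $\sigma\in\mathcal A_j$ to the degree-$j$ derivation of the free Lie ring $\mathcal L(F_n)=\bigoplus_k\Gamma_k(F_n)/\Gamma_{k+1}(F_n)$ induced by $x\mapsto\sigma(x)x^{-1}$; it is injective on $\bigoplus_j\mathcal A_j/\mathcal A_{j+1}$. *)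

theory Defs
  imports "HOL-Algebra.Algebra"
begin

text \<open>A letter (i, True) is the generator x_i, (i, False) its inverse.\<close>
type_synonym fword = "(nat \<times> bool) list"

fun fred :: "fword \<Rightarrow> fword" where
  "fred [] = []"
| "fred (x # xs) =
     (case fred xs of
        [] \<Rightarrow> [x]
      | y # ys \<Rightarrow> (if fst y = fst x \<and> snd y \<noteq> snd x then ys else x # y # ys))"

definition free_group :: "nat \<Rightarrow> fword monoid" where
  "free_group n =
     \<lparr> carrier = {w. fred w = w \<and> (\<forall>x\<in>set w. fst x < n)},
       monoid.mult = (\<lambda>u v. fred (u @ v)),
       monoid.one = [] \<rparr>"

definition comm_sub :: "('a, 'b) monoid_scheme \<Rightarrow> 'a set \<Rightarrow> 'a set \<Rightarrow> 'a set" where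
  "comm_sub G A B = generate G
     {a \<otimes>\<^bsub>G\<^esub> b \<otimes>\<^bsub>G\<^esub> inv\<^bsub>G\<^esub> a \<otimes>\<^bsub>G\<^esub> inv\<^bsub>G\<^esub> b | a b. a \<in> A \<and> b \<in> B}"

text \<open>lower_central G H j is Gamma_j(H) for j >= 1 (Gamma_1(H) = H,
  Gamma_{k+1}(H) = [H, Gamma_k(H)]); index 0 is set to H by convention and never used.\<close>
fun lower_central :: "('a, 'b) monoid_scheme \<Rightarrow> 'a set \<Rightarrow> nat \<Rightarrow> 'a set" where
  "lower_central G H 0 = H"
| "lower_central G H (Suc 0) = H"
| "lower_central G H (Suc (Suc k)) = comm_sub G H (lower_central G H (Suc k))"

abbreviation AutF :: "nat \<Rightarrow> (fword \<Rightarrow> fword) monoid" where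
  "AutF n \<equiv> AutoGroup (free_group n)"

definition andreadakis :: "nat \<Rightarrow> nat \<Rightarrow> (fword \<Rightarrow> fword) set" where
  "andreadakis n j =
     {\<sigma> \<in> carrier (AutF n). \<forall>x \<in> carrier (free_group n).
        \<sigma> x \<otimes>\<^bsub>free_group n\<^esub> inv\<^bsub>free_group n\<^esub> x
          \<in> lower_central (free_group n) (carrier (free_group n)) (Suc j)}"

definition IA :: "nat \<Rightarrow> (fword \<Rightarrow> fword) set" where
  "IA n = andreadakis n 1"

end

theory Submission
  imports Defs
begin

text \<open>Since K normalizes H and \<open>[K, H] \<subseteq> [H, H]\<close>, the three subgroups lemma gives
  \<open>[\<Gamma>\<^sub>i(K), \<Gamma>\<^sub>l(H)] \<subseteq> \<Gamma>\<^sub>i\<^sub>+\<^sub>l(H)\<close>, and from this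
  \<open>\<Gamma>\<^sub>j(HK) = \<Gamma>\<^sub>j(H) \<Gamma>\<^sub>j(K)\<close>.
  On the other side, the Johnson condition shows by induction on j that a product hk with
  \<open>h \<in> H\<close>, \<open>k \<in> K\<close> lies in \<open>\<A>\<^sub>j\<close> only if both factors do, i.e.
  \<open>\<A>\<^sub>j \<inter> HK = (\<A>\<^sub>j \<inter> H)(\<A>\<^sub>j \<inter> K)\<close>.
  The Andreadakis equalities for H and K identify the two right-hand sides.\<close>

section \<open>The free group\<close>

definition cancels :: "nat \<times> bool \<Rightarrow> nat \<times> bool \<Rightarrow> bool" where
  "cancels x y \<longleftrightarrow> fst y = fst x \<and> snd y \<noteq> snd x"

definition reduce_cons :: "nat \<times> bool \<Rightarrow> fword \<Rightarrow> fword" where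
  "reduce_cons x w = (case w of [] \<Rightarrow> [x] | y # ys \<Rightarrow> (if cancels x y then ys else x # y # ys))"

lemma fred_Cons: "fred (x # xs) = reduce_cons x (fred xs)"
  by (simp add: reduce_cons_def cancels_def split: list.splits)

declare fred.simps(2)[simp del]

fun reduced :: "fword \<Rightarrow> bool" where
  "reduced [] = True"
| "reduced [x] = True"
| "reduced (x # y # ys) = (\<not> cancels x y \<and> reduced (y # ys))"

lemma reduced_tl: "reduced (x # xs) \<Longrightarrow> reduced xs"
  by (cases xs) auto

lemma reduced_reduce_cons: "reduced w \<Longrightarrow> reduced (reduce_cons x w)"
  by (cases w) (auto simp: reduce_cons_def dest: reduced_tl)

lemma reduced_fred: "reduced (fred w)"
  by (induction w) (auto simp: fred_Cons reduced_reduce_cons)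

lemma fred_reduced: "reduced w \<Longrightarrow> fred w = w"
proof (induction w)
  case (Cons x xs)
  then have "fred xs = xs" using reduced_tl by blast
  then show ?case using Cons.prems by (cases xs) (auto simp: fred_Cons reduce_cons_def)
qed simp

lemma fred_idem: "fred (fred w) = fred w"
  by (simp add: fred_reduced reduced_fred)

text \<open>Reducing \<open>u @ v\<close> pushes the letters of u, from right to left, onto the reduced word
  \<open>fred v\<close>; associativity comes down to this action factoring through \<open>fred\<close>
  (\<open>foldr_reduce_cons_fred\<close>).\<close>

lemma fred_append: "fred (u @ v) = foldr reduce_cons u (fred v)"
  by (induction u) (auto simp: fred_Cons)

lemma reduced_foldr_reduce_cons: "reduced w \<Longrightarrow> reduced (foldr reduce_cons u w)"
  by (induction u) (auto simp: reduced_reduce_cons)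

lemma cancels_unique: "cancels x y \<Longrightarrow> cancels y z \<Longrightarrow> z = x"
  by (cases x; cases y; cases z) (auto simp: cancels_def)

lemma reduce_cons_cancel: "reduced z \<Longrightarrow> cancels x y \<Longrightarrow> reduce_cons x (reduce_cons y z) = z"
proof (cases z)
  case (Cons y' zs)
  assume r: "reduced z" and c: "cancels x y"
  show ?thesis
  proof (cases "cancels y y'")
    case True
    then have "y' = x" using cancels_unique[OF c] by simp
    then show ?thesis using Cons True r by (cases zs) (auto simp: reduce_cons_def)
  next
    case False
    then show ?thesis using Cons c by (simp add: reduce_cons_def)
  qed
qed (simp add: reduce_cons_def)

lemma foldr_reduce_cons_reduce_cons:
  assumes "reduced r" "reduced w"
  shows "foldr reduce_cons (reduce_cons x r) w = reduce_cons x (foldr reduce_cons r w)"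
proof (cases r)
  case (Cons y r')
  show ?thesis
  proof (cases "cancels x y")
    case True
    have "reduced (foldr reduce_cons r' w)" using assms reduced_foldr_reduce_cons by blast
    then show ?thesis using Cons True reduce_cons_cancel by (simp add: reduce_cons_def)
  qed (simp add: Cons reduce_cons_def)
qed (simp add: reduce_cons_def)

lemma foldr_reduce_cons_fred: "reduced w \<Longrightarrow> foldr reduce_cons (fred u) w = foldr reduce_cons u w"
  by (induction u) (auto simp: fred_Cons foldr_reduce_cons_reduce_cons reduced_fred)

lemma set_fred: "set (fred w) \<subseteq> set w"
proof (induction w)
  case (Cons x xs)
  have "set (reduce_cons x w) \<subseteq> insert x (set w)" for w
    by (cases w) (auto simp: reduce_cons_def)
  then show ?case using Cons by (auto simp: fred_Cons)
qed simp

definition inverse_word :: "fword \<Rightarrow> fword" where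
  "inverse_word w = rev (map (\<lambda>(i, b). (i, \<not> b)) w)"

lemma foldr_reduce_cons_inverse_word: "reduced w \<Longrightarrow> foldr reduce_cons (inverse_word w) w = []"
proof (induction w)
  case (Cons a w)
  have "foldr reduce_cons (inverse_word (a # w)) (a # w)
      = foldr reduce_cons (inverse_word w) (reduce_cons (fst a, \<not> snd a) (a # w))"
    by (simp add: inverse_word_def split_beta)
  also have "reduce_cons (fst a, \<not> snd a) (a # w) = w"
    by (simp add: reduce_cons_def cancels_def)
  finally show ?case using Cons reduced_tl by metis
qed (simp add: inverse_word_def)

lemma group_free_group: "group (free_group n)"
proof (rule groupI)
  fix x y assume "x \<in> carrier (free_group n)" "y \<in> carrier (free_group n)"
  then show "x \<otimes>\<^bsub>free_group n\<^esub> y \<in> carrier (free_group n)"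
    using set_fred[of "x @ y"] by (auto simp: free_group_def fred_idem)
next
  fix x y z
  have "fred (fred (x @ y) @ z) = foldr reduce_cons (fred (x @ y)) (fred z)"
    by (simp only: fred_append[of "fred (x @ y)"])
  also have "\<dots> = foldr reduce_cons x (foldr reduce_cons y (fred z))"
    by (simp add: foldr_reduce_cons_fred reduced_fred)
  also have "\<dots> = fred (x @ fred (y @ z))"
    by (simp add: fred_append fred_reduced reduced_foldr_reduce_cons reduced_fred)
  finally show "x \<otimes>\<^bsub>free_group n\<^esub> y \<otimes>\<^bsub>free_group n\<^esub> z = x \<otimes>\<^bsub>free_group n\<^esub> (y \<otimes>\<^bsub>free_group n\<^esub> z)"
    by (simp add: free_group_def)
next
  fix x assume x: "x \<in> carrier (free_group n)"
  then have "fred x = x" by (simp add: free_group_def)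
  then have rx: "reduced x" using reduced_fred[of x] by simp
  let ?y = "fred (inverse_word x)"
  have "?y \<in> carrier (free_group n)"
    using x set_fred[of "inverse_word x"] by (fastforce simp: free_group_def fred_idem inverse_word_def)
  moreover have "fred (?y @ x) = []"
    using rx \<open>fred x = x\<close> foldr_reduce_cons_inverse_word
    by (simp add: fred_append foldr_reduce_cons_fred)
  ultimately show "\<exists>y\<in>carrier (free_group n). y \<otimes>\<^bsub>free_group n\<^esub> x = \<one>\<^bsub>free_group n\<^esub>"
    by (auto simp: free_group_def)
qed (simp_all add: free_group_def)

section \<open>Commutator subgroups\<close>

definition commutator :: "('a, 'b) monoid_scheme \<Rightarrow> 'a \<Rightarrow> 'a \<Rightarrow> 'a" where
  "commutator G x y = x \<otimes>\<^bsub>G\<^esub> y \<otimes>\<^bsub>G\<^esub> inv\<^bsub>G\<^esub> x \<otimes>\<^bsub>G\<^esub> inv\<^bsub>G\<^esub> y"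

context group begin

lemma mult_inv_cancel_left: "x \<in> carrier G \<Longrightarrow> y \<in> carrier G \<Longrightarrow> x \<otimes> (inv x \<otimes> y) = y"
  by (simp add: m_assoc[symmetric])

lemma inv_mult_cancel_left: "x \<in> carrier G \<Longrightarrow> y \<in> carrier G \<Longrightarrow> inv x \<otimes> (x \<otimes> y) = y"
  by (simp add: m_assoc[symmetric])

lemmas group_simps = m_assoc inv_mult_group mult_inv_cancel_left inv_mult_cancel_left

lemma commutator_closed [simp]:
  "x \<in> carrier G \<Longrightarrow> y \<in> carrier G \<Longrightarrow> commutator G x y \<in> carrier G"
  by (simp add: commutator_def)

lemma commutator_inv: "x \<in> carrier G \<Longrightarrow> y \<in> carrier G \<Longrightarrow> commutator G x y = inv (commutator G y x)"
  by (simp add: commutator_def group_simps)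

lemma commutator_swap_mem:
  assumes "subgroup N G" "x \<in> carrier G" "y \<in> carrier G" "commutator G x y \<in> N"
  shows "commutator G y x \<in> N"
  using subgroup.m_inv_closed[OF assms(1,4)] commutator_inv[OF assms(3,2)] by simp

lemma hall_witt_identity:
  assumes [simp]: "x \<in> carrier G" "y \<in> carrier G" "z \<in> carrier G"
  shows "commutator G (commutator G x y) z
       = x \<otimes> inv (z \<otimes> commutator G (commutator G (inv z) (inv x)) y \<otimes> inv z
           \<otimes> (y \<otimes> commutator G (commutator G (inv y) z) (inv x) \<otimes> inv y)) \<otimes> inv x"
  by (simp add: commutator_def group_simps)

lemma comm_sub_eq_generate: "comm_sub G A B = generate G {commutator G a b | a b. a \<in> A \<and> b \<in> B}"
  by (simp add: comm_sub_def commutator_def)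

lemma commutator_in_comm_sub: "a \<in> A \<Longrightarrow> b \<in> B \<Longrightarrow> commutator G a b \<in> comm_sub G A B"
  unfolding comm_sub_eq_generate by (rule generate.incl) blast

lemma comm_sub_subgroup: "A \<subseteq> carrier G \<Longrightarrow> B \<subseteq> carrier G \<Longrightarrow> subgroup (comm_sub G A B) G"
  unfolding comm_sub_eq_generate by (rule generate_is_subgroup) (force intro: commutator_closed)

lemma comm_sub_mono: "A \<subseteq> A' \<Longrightarrow> B \<subseteq> B' \<Longrightarrow> comm_sub G A B \<subseteq> comm_sub G A' B'"
  unfolding comm_sub_eq_generate by (rule mono_generate) blast

lemma comm_sub_subset_subgroup:
  assumes "subgroup N G" "\<And>a b. a \<in> A \<Longrightarrow> b \<in> B \<Longrightarrow> commutator G a b \<in> N"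
  shows "comm_sub G A B \<subseteq> N"
  unfolding comm_sub_eq_generate by (rule generate_subgroup_incl) (use assms in auto)

lemma comm_sub_subset: "subgroup S G \<Longrightarrow> A \<subseteq> S \<Longrightarrow> B \<subseteq> S \<Longrightarrow> comm_sub G A B \<subseteq> S"
  by (rule comm_sub_subset_subgroup)
    (auto simp: commutator_def intro!: subgroup.m_closed subgroup.m_inv_closed)

lemma hom_comm_sub:
  assumes f: "f \<in> hom G G" and A: "A \<subseteq> carrier G" and B: "B \<subseteq> carrier G"
  shows "f ` comm_sub G A B = comm_sub G (f ` A) (f ` B)"
proof -
  have gh: "group_hom G G f" using f by (simp add: group_hom_def group_hom_axioms_def is_group)
  have f_commutator: "f (commutator G a b) = commutator G (f a) (f b)"
    if "a \<in> carrier G" "b \<in> carrier G" for a b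
    using that f by (simp add: commutator_def hom_mult group_hom.hom_inv[OF gh])
  have img: "f ` {commutator G a b | a b. a \<in> A \<and> b \<in> B}
      = {commutator G a b | a b. a \<in> f ` A \<and> b \<in> f ` B}"
  proof (intro equalityI subsetI)
    fix y assume "y \<in> {commutator G a b | a b. a \<in> f ` A \<and> b \<in> f ` B}"
    then obtain a b where ab: "a \<in> A" "b \<in> B" "y = commutator G (f a) (f b)" by blast
    moreover have "a \<in> carrier G" "b \<in> carrier G" using ab A B by auto
    ultimately have "y = f (commutator G a b)" by (simp add: f_commutator)
    with ab show "y \<in> f ` {commutator G a b | a b. a \<in> A \<and> b \<in> B}" by blast
  next
    fix y assume "y \<in> f ` {commutator G a b | a b. a \<in> A \<and> b \<in> B}"
    then obtain a b where ab: "a \<in> A" "b \<in> B" "y = f (commutator G a b)" by blast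
    moreover have "a \<in> carrier G" "b \<in> carrier G" using ab A B by auto
    ultimately show "y \<in> {commutator G a b | a b. a \<in> f ` A \<and> b \<in> f ` B}"
      by (auto simp: f_commutator)
  qed
  have X: "{commutator G a b | a b. a \<in> A \<and> b \<in> B} \<subseteq> carrier G"
    using A B by (auto intro: commutator_closed)
  show ?thesis
    using group_hom.generate_img[OF gh X] img by (simp add: comm_sub_eq_generate)
qed

section \<open>The lower central series of a subgroup\<close>

lemma lower_central_Suc: "1 \<le> j \<Longrightarrow> lower_central G S (Suc j) = comm_sub G S (lower_central G S j)"
  by (cases j) auto

lemma lower_central_subset: "subgroup S G \<Longrightarrow> lower_central G S j \<subseteq> S"
proof (induction j)
  case (Suc j)
  then show ?case by (cases j) (simp_all add: comm_sub_subset)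
qed simp

lemma lower_central_carrier: "subgroup S G \<Longrightarrow> lower_central G S j \<subseteq> carrier G"
  using lower_central_subset subgroup.subset by blast

lemma lower_central_subgroup: "subgroup S G \<Longrightarrow> subgroup (lower_central G S j) G"
proof (cases j)
  case (Suc k)
  assume S: "subgroup S G"
  then show ?thesis
    using Suc lower_central_carrier[OF S] subgroup.subset[OF S] by (cases k) (simp_all add: comm_sub_subgroup)
qed simp

lemma lower_central_Suc_subset: "subgroup S G \<Longrightarrow> lower_central G S (Suc j) \<subseteq> lower_central G S j"
proof (induction j)
  case (Suc j)
  then show ?case by (cases j) (simp_all add: lower_central_subset comm_sub_subset comm_sub_mono)
qed simp

lemma lower_central_mono: "S \<subseteq> T \<Longrightarrow> lower_central G S j \<subseteq> lower_central G T j"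
proof (induction j)
  case (Suc j)
  then show ?case by (cases j) (simp_all add: comm_sub_mono)
qed simp

lemma conj_hom: "g \<in> carrier G \<Longrightarrow> (\<lambda>x. g \<otimes> x \<otimes> inv g) \<in> hom G G"
  by (rule homI) (simp_all add: group_simps)

lemma hom_lower_central:
  assumes f: "f \<in> hom G G" and S: "subgroup S G"
  shows "f ` lower_central G S j \<subseteq> lower_central G (f ` S) j"
proof (induction j)
  case (Suc j)
  show ?case
  proof (cases j)
    case (Suc k)
    have "f ` lower_central G S (Suc j) = comm_sub G (f ` S) (f ` lower_central G S j)"
      using Suc hom_comm_sub[OF f subgroup.subset[OF S] lower_central_carrier[OF S]] by simp
    also have "\<dots> \<subseteq> comm_sub G (f ` S) (lower_central G (f ` S) j)"
      using Suc.IH by (rule comm_sub_mono[OF subset_refl])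
    finally show ?thesis using Suc by simp
  qed simp
qed simp

lemma lower_central_conj:
  assumes S: "subgroup S G" and g: "g \<in> carrier G"
    and normalizes: "\<And>s. s \<in> S \<Longrightarrow> g \<otimes> s \<otimes> inv g \<in> S"
    and x: "x \<in> lower_central G S j"
  shows "g \<otimes> x \<otimes> inv g \<in> lower_central G S j"
proof -
  have "(\<lambda>x. g \<otimes> x \<otimes> inv g) ` S \<subseteq> S" using normalizes by blast
  then show ?thesis
    using hom_lower_central[OF conj_hom[OF g] S] lower_central_mono x by blast
qed

lemma lower_central_conj_self:
  assumes S: "subgroup S G" and g: "g \<in> S" and x: "x \<in> lower_central G S j"
  shows "g \<otimes> x \<otimes> inv g \<in> lower_central G S j"
  using S g x
  by (intro lower_central_conj) (auto intro!: subgroup.m_closed subgroup.m_inv_closed simp: subgroup.mem_carrier)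

lemma commutator_lower_central:
  assumes S: "subgroup S G" and j: "1 \<le> j" and x: "x \<in> S" and y: "y \<in> lower_central G S j"
  shows "commutator G x y \<in> lower_central G S (Suc j)" "commutator G y x \<in> lower_central G S (Suc j)"
proof -
  show xy: "commutator G x y \<in> lower_central G S (Suc j)"
    using commutator_in_comm_sub[OF x y] lower_central_Suc[OF j] by simp
  show "commutator G y x \<in> lower_central G S (Suc j)"
    using commutator_swap_mem[OF lower_central_subgroup[OF S] _ _ xy] x y
      subgroup.mem_carrier[OF S] lower_central_carrier[OF S] by blast
qed

lemma subgroup_commutators_in:
  assumes M: "subgroup M G" and N: "subgroup N G" and C: "C \<subseteq> carrier G"
    and normal: "\<And>g x. g \<in> M \<Longrightarrow> x \<in> N \<Longrightarrow> g \<otimes> x \<otimes> inv g \<in> N"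
  shows "subgroup {g \<in> M. \<forall>z \<in> C. commutator G g z \<in> N} G"
proof (rule subgroupI)
  have "commutator G \<one> z = \<one>" if "z \<in> C" for z using C that by (auto simp: commutator_def)
  then show "{g \<in> M. \<forall>z \<in> C. commutator G g z \<in> N} \<noteq> {}"
    using subgroup.one_closed[OF M] subgroup.one_closed[OF N] by auto
next
  fix g assume "g \<in> {g \<in> M. \<forall>z \<in> C. commutator G g z \<in> N}"
  then have g: "g \<in> M" "inv g \<in> M" "g \<in> carrier G" and gN: "\<And>z. z \<in> C \<Longrightarrow> commutator G g z \<in> N"
    using subgroup.m_inv_closed[OF M] subgroup.mem_carrier[OF M] by auto
  have "commutator G (inv g) z = inv g \<otimes> inv (commutator G g z) \<otimes> inv (inv g)" if "z \<in> C" for z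
    using g C that by (auto simp: commutator_def group_simps)
  then show "inv g \<in> {g \<in> M. \<forall>z \<in> C. commutator G g z \<in> N}"
    using g gN normal[of "inv g"] subgroup.m_inv_closed[OF N] by auto
next
  fix g h assume "g \<in> {g \<in> M. \<forall>z \<in> C. commutator G g z \<in> N}" "h \<in> {g \<in> M. \<forall>z \<in> C. commutator G g z \<in> N}"
  then have gh: "g \<in> M" "h \<in> M" "g \<in> carrier G" "h \<in> carrier G"
    and N_gh: "\<And>z. z \<in> C \<Longrightarrow> commutator G g z \<in> N" "\<And>z. z \<in> C \<Longrightarrow> commutator G h z \<in> N"
    using subgroup.mem_carrier[OF M] by auto
  have "commutator G (g \<otimes> h) z = g \<otimes> commutator G h z \<otimes> inv g \<otimes> commutator G g z" if "z \<in> C" for z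
    using gh C that by (auto simp: commutator_def group_simps)
  then show "g \<otimes> h \<in> {g \<in> M. \<forall>z \<in> C. commutator G g z \<in> N}"
    using gh N_gh normal subgroup.m_closed[OF M] subgroup.m_closed[OF N] by auto
qed (use M in \<open>auto dest: subgroup.mem_carrier\<close>)

lemma three_subgroups:
  assumes M: "subgroup M G" and A: "subgroup A G" and B: "subgroup B G" and C: "subgroup C G"
    and ABC_M: "A \<subseteq> M" "B \<subseteq> M" "C \<subseteq> M"
    and N: "subgroup N G" and normal: "\<And>g x. g \<in> M \<Longrightarrow> x \<in> N \<Longrightarrow> g \<otimes> x \<otimes> inv g \<in> N"
    and BCA: "\<And>x y z. x \<in> A \<Longrightarrow> y \<in> B \<Longrightarrow> z \<in> C \<Longrightarrow> commutator G (commutator G y z) x \<in> N"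
    and CAB: "\<And>x y z. x \<in> A \<Longrightarrow> y \<in> B \<Longrightarrow> z \<in> C \<Longrightarrow> commutator G (commutator G z x) y \<in> N"
  shows "comm_sub G (comm_sub G A B) C \<subseteq> N"
proof (rule comm_sub_subset_subgroup[OF N])
  have ABC: "x \<in> carrier G" "y \<in> carrier G" "z \<in> carrier G" if "x \<in> A" "y \<in> B" "z \<in> C" for x y z
    using that by (simp_all add: subgroup.mem_carrier[OF A] subgroup.mem_carrier[OF B] subgroup.mem_carrier[OF C])
  have ABC_inv: "inv x \<in> A" "inv y \<in> B" "inv z \<in> C" if "x \<in> A" "y \<in> B" "z \<in> C" for x y z
    using that by (simp_all add: subgroup.m_inv_closed[OF A] subgroup.m_inv_closed[OF B] subgroup.m_inv_closed[OF C])
  have "commutator G (commutator G x y) z \<in> N" if x: "x \<in> A" and y: "y \<in> B" and z: "z \<in> C" for x y z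
  proof -
    have "z \<otimes> commutator G (commutator G (inv z) (inv x)) y \<otimes> inv z \<in> N"
      using normal[OF subsetD[OF ABC_M(3) z] CAB[OF ABC_inv(1)[OF x y z] y ABC_inv(3)[OF x y z]]] .
    moreover have "y \<otimes> commutator G (commutator G (inv y) z) (inv x) \<otimes> inv y \<in> N"
      using normal[OF subsetD[OF ABC_M(2) y] BCA[OF ABC_inv(1)[OF x y z] ABC_inv(2)[OF x y z] z]] .
    ultimately have "inv (z \<otimes> commutator G (commutator G (inv z) (inv x)) y \<otimes> inv z
        \<otimes> (y \<otimes> commutator G (commutator G (inv y) z) (inv x) \<otimes> inv y)) \<in> N"
      using subgroup.m_inv_closed[OF N subgroup.m_closed[OF N]] by blast
    then have "x \<otimes> inv (z \<otimes> commutator G (commutator G (inv z) (inv x)) y \<otimes> inv z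
        \<otimes> (y \<otimes> commutator G (commutator G (inv y) z) (inv x) \<otimes> inv y)) \<otimes> inv x \<in> N"
      by (rule normal[OF subsetD[OF ABC_M(1) x]])
    then show ?thesis using hall_witt_identity[OF ABC[OF x y z]] by simp
  qed
  moreover have "commutator G x y \<in> M" if "x \<in> A" "y \<in> B" for x y
    unfolding commutator_def using that ABC_M
    by (intro subgroup.m_closed[OF M] subgroup.m_inv_closed[OF M]) auto
  ultimately have "{commutator G a b | a b. a \<in> A \<and> b \<in> B} \<subseteq> {g \<in> M. \<forall>z \<in> C. commutator G g z \<in> N}"
    by blast
  then have "comm_sub G A B \<subseteq> {g \<in> M. \<forall>z \<in> C. commutator G g z \<in> N}"
    unfolding comm_sub_eq_generate
    by (rule generate_subgroup_incl[OF _ subgroup_commutators_in[OF M N subgroup.subset[OF C] normal]])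
  then show "commutator G x z \<in> N" if "x \<in> comm_sub G A B" "z \<in> C" for x z
    using that by blast
qed

lemma commutator_lower_central_add:
  assumes S: "subgroup S G"
  shows "1 \<le> i \<Longrightarrow> 1 \<le> l \<Longrightarrow> x \<in> lower_central G S i \<Longrightarrow> y \<in> lower_central G S l
    \<Longrightarrow> commutator G x y \<in> lower_central G S (i + l)"
proof (induction i arbitrary: l x y rule: nat_induct_at_least)
  case base
  then show ?case using commutator_lower_central(1)[OF S] by simp
next
  case (Suc i)
  let ?N = "lower_central G S (Suc i + l)"
  have Sc: "S \<subseteq> carrier G" by (rule subgroup.subset[OF S])
  have "comm_sub G (comm_sub G S (lower_central G S i)) (lower_central G S l) \<subseteq> ?N"
  proof (rule three_subgroups[OF S S lower_central_subgroup[OF S] lower_central_subgroup[OF S]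
        subset_refl lower_central_subset[OF S] lower_central_subset[OF S] lower_central_subgroup[OF S]])
    show "g \<otimes> x \<otimes> inv g \<in> ?N" if "g \<in> S" "x \<in> ?N" for g x
      using that by (rule lower_central_conj_self[OF S])
  next
    fix x y z assume x: "x \<in> S" and y: "y \<in> lower_central G S i" and z: "z \<in> lower_central G S l"
    have "commutator G y z \<in> lower_central G S (i + l)" using Suc y z by blast
    then show "commutator G (commutator G y z) x \<in> ?N"
      using commutator_lower_central(2)[OF S _ x] Suc.hyps by simp
  next
    fix x y z assume x: "x \<in> S" and y: "y \<in> lower_central G S i" and z: "z \<in> lower_central G S l"
    have zx: "commutator G z x \<in> lower_central G S (Suc l)"
      by (rule commutator_lower_central(2)[OF S Suc.prems(1) x z])
    then have "commutator G y (commutator G z x) \<in> ?N" using Suc.IH[of "Suc l"] Suc.hyps y by simp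
    then show "commutator G (commutator G z x) y \<in> ?N"
      using commutator_swap_mem[OF lower_central_subgroup[OF S]] y zx lower_central_carrier[OF S] by blast
  qed
  moreover have "commutator G x y \<in> comm_sub G (comm_sub G S (lower_central G S i)) (lower_central G S l)"
    using commutator_in_comm_sub Suc.prems lower_central_Suc[OF Suc.hyps] by simp
  ultimately show ?case by auto
qed

end

section \<open>Products of a subgroup with a normalizing subgroup\<close>

locale normalizing_pair = group G for G (structure) +
  fixes H K
  assumes H_subgroup: "subgroup H G" and K_subgroup: "subgroup K G"
    and normalizes: "\<And>k h. k \<in> K \<Longrightarrow> h \<in> H \<Longrightarrow> k \<otimes> h \<otimes> inv k \<in> H"
begin

lemma H_carrier: "h \<in> H \<Longrightarrow> h \<in> carrier G"
  by (rule subgroup.mem_carrier[OF H_subgroup])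

lemma K_carrier: "k \<in> K \<Longrightarrow> k \<in> carrier G"
  by (rule subgroup.mem_carrier[OF K_subgroup])

lemma lower_central_H_carrier: "x \<in> lower_central G H j \<Longrightarrow> x \<in> carrier G"
  using lower_central_carrier[OF H_subgroup] by blast

lemma lower_central_K_carrier: "x \<in> lower_central G K j \<Longrightarrow> x \<in> carrier G"
  using lower_central_carrier[OF K_subgroup] by blast

lemma mem_set_mult: "g \<in> H <#> K \<longleftrightarrow> (\<exists>h\<in>H. \<exists>k\<in>K. g = h \<otimes> k)"
  unfolding set_mult_def by blast

lemma set_mult_subgroup: "subgroup (H <#> K) G"
proof (rule subgroupI)
  show "H <#> K \<subseteq> carrier G" using H_carrier K_carrier by (auto simp: mem_set_mult)
  have "\<one> \<otimes> \<one> \<in> H <#> K"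
    using subgroup.one_closed[OF H_subgroup] subgroup.one_closed[OF K_subgroup] mem_set_mult by blast
  then show "H <#> K \<noteq> {}" by blast
next
  fix x assume "x \<in> H <#> K"
  then obtain h k where hk: "h \<in> H" "k \<in> K" "x = h \<otimes> k" by (auto simp: mem_set_mult)
  have "inv x = (inv k \<otimes> inv h \<otimes> inv (inv k)) \<otimes> inv k"
    using hk H_carrier K_carrier by (simp add: group_simps)
  moreover have "inv k \<otimes> inv h \<otimes> inv (inv k) \<in> H" "inv k \<in> K"
    using hk normalizes subgroup.m_inv_closed[OF H_subgroup] subgroup.m_inv_closed[OF K_subgroup] by auto
  ultimately show "inv x \<in> H <#> K" by (auto simp: mem_set_mult)
next
  fix x y assume "x \<in> H <#> K" "y \<in> H <#> K"
  then obtain h k h' k' where hk: "h \<in> H" "k \<in> K" "x = h \<otimes> k" "h' \<in> H" "k' \<in> K" "y = h' \<otimes> k'"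
    by (auto simp: mem_set_mult)
  have "x \<otimes> y = (h \<otimes> (k \<otimes> h' \<otimes> inv k)) \<otimes> (k \<otimes> k')"
    using hk H_carrier K_carrier by (simp add: group_simps)
  moreover have "h \<otimes> (k \<otimes> h' \<otimes> inv k) \<in> H" "k \<otimes> k' \<in> K"
    using hk normalizes subgroup.m_closed[OF H_subgroup] subgroup.m_closed[OF K_subgroup] by auto
  ultimately show "x \<otimes> y \<in> H <#> K" by (auto simp: mem_set_mult)
qed

lemma H_subset_set_mult: "H \<subseteq> H <#> K"
  using H_carrier subgroup.one_closed[OF K_subgroup] by (force simp: mem_set_mult)

lemma K_subset_set_mult: "K \<subseteq> H <#> K"
  using K_carrier subgroup.one_closed[OF H_subgroup] by (force simp: mem_set_mult)

lemma K_conj_lower_central: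
  "k \<in> K \<Longrightarrow> x \<in> lower_central G H j \<Longrightarrow> k \<otimes> x \<otimes> inv k \<in> lower_central G H j"
  by (rule lower_central_conj[OF H_subgroup K_carrier normalizes])

lemma set_mult_conj_lower_central:
  assumes g: "g \<in> H <#> K" and x: "x \<in> lower_central G H j"
  shows "g \<otimes> x \<otimes> inv g \<in> lower_central G H j"
proof -
  obtain h k where hk: "h \<in> H" "k \<in> K" "g = h \<otimes> k" using g by (auto simp: mem_set_mult)
  have "h \<otimes> (k \<otimes> x \<otimes> inv k) \<otimes> inv h \<in> lower_central G H j"
    by (rule lower_central_conj_self[OF H_subgroup hk(1) K_conj_lower_central[OF hk(2) x]])
  moreover have "h \<otimes> (k \<otimes> x \<otimes> inv k) \<otimes> inv h = g \<otimes> x \<otimes> inv g"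
    using hk H_carrier K_carrier subsetD[OF lower_central_carrier[OF H_subgroup] x] by (simp add: group_simps)
  ultimately show ?thesis by simp
qed

lemma normalizing_pair_lower_central:
  "normalizing_pair G (lower_central G H i) (lower_central G K j)"
proof (intro normalizing_pair.intro normalizing_pair_axioms.intro is_group lower_central_subgroup
    H_subgroup K_subgroup)
  show "k \<otimes> h \<otimes> inv k \<in> lower_central G H i" if "k \<in> lower_central G K j" "h \<in> lower_central G H i" for k h
    using that lower_central_subset[OF K_subgroup] K_conj_lower_central by blast
qed

text \<open>In the main theorem \<open>A\<close> is the Andreadakis filtration and \<open>disjoint\<close> is the
  Johnson condition.\<close>

lemma factors_mem_filtration:
  assumes A_subgroup: "\<And>j. subgroup (A j) G" and A_Suc: "\<And>j. A (Suc j) \<subseteq> A j"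
    and A_1: "H \<subseteq> A 1" "K \<subseteq> A 1"
    and disjoint: "\<And>i h k. 1 \<le> i \<Longrightarrow> h \<in> A i \<inter> H \<Longrightarrow> k \<in> A i \<inter> K
      \<Longrightarrow> inv k \<otimes> h \<in> A (Suc i) \<Longrightarrow> h \<in> A (Suc i)"
  shows "1 \<le> j \<Longrightarrow> h \<in> H \<Longrightarrow> k \<in> K \<Longrightarrow> h \<otimes> k \<in> A j \<Longrightarrow> h \<in> A j \<and> k \<in> A j"
proof (induction j arbitrary: h k rule: nat_induct_at_least)
  case base
  then show ?case using A_1 by auto
next
  case (Suc j)
  then have h: "h \<in> H" "h \<in> carrier G" "h \<in> A j" and k: "k \<in> K" "k \<in> carrier G" "k \<in> A j"
    using A_Suc H_carrier K_carrier by blast+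
  note A_closed = subgroup.m_closed[OF A_subgroup] subgroup.m_inv_closed[OF A_subgroup]
  \<comment> \<open>Write \<open>hk = k h'\<close> with \<open>h' = k\<inverse>hk\<close>, the form \<open>disjoint\<close> speaks about.\<close>
  let ?h' = "inv k \<otimes> h \<otimes> k"
  have "?h' \<in> H"
    using normalizes[of "inv k" h] h k subgroup.m_inv_closed[OF K_subgroup] by simp
  moreover have "?h' \<in> A j" using h k A_closed by blast
  moreover have "inv k \<in> K" "inv k \<in> A j" using k subgroup.m_inv_closed[OF K_subgroup] A_closed by blast+
  moreover have "inv (inv k) \<otimes> ?h' = h \<otimes> k" using h k by (simp add: group_simps)
  ultimately have "?h' \<in> A (Suc j)" using disjoint[of j ?h' "inv k"] Suc by simp
  moreover have "k = (h \<otimes> k) \<otimes> inv ?h'" and "h = (h \<otimes> k) \<otimes> inv k"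
    using h k by (simp_all add: group_simps)
  ultimately show ?case using Suc.prems A_closed by metis
qed

lemma filtration_inter_set_mult:
  assumes A_subgroup: "\<And>j. subgroup (A j) G" and A_Suc: "\<And>j. A (Suc j) \<subseteq> A j"
    and A_1: "H \<subseteq> A 1" "K \<subseteq> A 1"
    and disjoint: "\<And>i h k. 1 \<le> i \<Longrightarrow> h \<in> A i \<inter> H \<Longrightarrow> k \<in> A i \<inter> K
      \<Longrightarrow> inv k \<otimes> h \<in> A (Suc i) \<Longrightarrow> h \<in> A (Suc i)"
    and j: "1 \<le> j"
  shows "A j \<inter> (H <#> K) = (A j \<inter> H) <#> (A j \<inter> K)"
  using factors_mem_filtration[OF assms] subgroup.m_closed[OF A_subgroup]
  by (fastforce simp: set_mult_def)

end

section \<open>Almost-direct products\<close>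

locale almost_direct_product = normalizing_pair +
  assumes almost_direct: "comm_sub G K H \<subseteq> comm_sub G H H"
begin

lemma commutator_K_H: "k \<in> K \<Longrightarrow> h \<in> H \<Longrightarrow> commutator G k h \<in> lower_central G H 2"
  using commutator_in_comm_sub almost_direct by (auto simp: numeral_2_eq_2)

lemma commutator_K_lower_central_H:
  "1 \<le> m \<Longrightarrow> k \<in> K \<Longrightarrow> x \<in> lower_central G H m \<Longrightarrow> commutator G k x \<in> lower_central G H (Suc m)"
proof (induction m arbitrary: k x rule: nat_induct_at_least)
  case base
  then show ?case using commutator_K_H by (simp add: numeral_2_eq_2)
next
  case (Suc m)
  let ?N = "lower_central G H (Suc (Suc m))"
  have "comm_sub G (comm_sub G H (lower_central G H m)) K \<subseteq> ?N"
  proof (rule three_subgroups[OF set_mult_subgroup H_subgroup lower_central_subgroup[OF H_subgroup]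
        K_subgroup H_subset_set_mult _ K_subset_set_mult lower_central_subgroup[OF H_subgroup]])
    show "lower_central G H m \<subseteq> H <#> K"
      using lower_central_subset[OF H_subgroup] H_subset_set_mult by blast
    show "g \<otimes> x \<otimes> inv g \<in> ?N" if "g \<in> H <#> K" "x \<in> ?N" for g x
      using that by (rule set_mult_conj_lower_central)
  next
    fix x y z assume x: "x \<in> H" and y: "y \<in> lower_central G H m" and z: "z \<in> K"
    have "commutator G z y \<in> lower_central G H (Suc m)" using Suc.IH z y by blast
    then have yz: "commutator G y z \<in> lower_central G H (Suc m)"
      using commutator_swap_mem[OF lower_central_subgroup[OF H_subgroup] K_carrier[OF z]]
        y lower_central_carrier[OF H_subgroup] by blast
    show "commutator G (commutator G y z) x \<in> ?N"
      using commutator_lower_central(2)[OF H_subgroup _ x yz] by simp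
  next
    fix x y z assume x: "x \<in> H" and y: "y \<in> lower_central G H m" and z: "z \<in> K"
    show "commutator G (commutator G z x) y \<in> ?N"
      using commutator_lower_central_add[OF H_subgroup _ Suc.hyps commutator_K_H[OF z x] y] by simp
  qed
  moreover have "commutator G x k \<in> comm_sub G (comm_sub G H (lower_central G H m)) K"
    using commutator_in_comm_sub Suc.prems lower_central_Suc[OF Suc.hyps] by simp
  ultimately show ?case
    using commutator_swap_mem[OF lower_central_subgroup[OF H_subgroup]] Suc.prems
      K_carrier lower_central_carrier[OF H_subgroup] by blast
qed

lemma commutator_lower_central_K_H:
  "1 \<le> i \<Longrightarrow> 1 \<le> l \<Longrightarrow> k \<in> lower_central G K i \<Longrightarrow> x \<in> lower_central G H l
    \<Longrightarrow> commutator G k x \<in> lower_central G H (i + l)"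
proof (induction i arbitrary: l k x rule: nat_induct_at_least)
  case base
  then show ?case using commutator_K_lower_central_H by simp
next
  case (Suc i)
  let ?N = "lower_central G H (Suc i + l)"
  note H_swap = commutator_swap_mem[OF lower_central_subgroup[OF H_subgroup]]
  have "comm_sub G (comm_sub G K (lower_central G K i)) (lower_central G H l) \<subseteq> ?N"
  proof (rule three_subgroups[OF set_mult_subgroup K_subgroup lower_central_subgroup[OF K_subgroup]
        lower_central_subgroup[OF H_subgroup] K_subset_set_mult _ _ lower_central_subgroup[OF H_subgroup]])
    show "lower_central G K i \<subseteq> H <#> K"
      using lower_central_subset[OF K_subgroup] K_subset_set_mult by blast
    show "lower_central G H l \<subseteq> H <#> K"
      using lower_central_subset[OF H_subgroup] H_subset_set_mult by blast
    show "g \<otimes> x \<otimes> inv g \<in> ?N" if "g \<in> H <#> K" "x \<in> ?N" for g x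
      using that by (rule set_mult_conj_lower_central)
  next
    fix a y z assume a: "a \<in> K" and y: "y \<in> lower_central G K i" and z: "z \<in> lower_central G H l"
    have "commutator G y z \<in> lower_central G H (i + l)" using Suc y z by blast
    then have "commutator G a (commutator G y z) \<in> ?N"
      using commutator_K_lower_central_H[OF _ a] Suc by simp
    then show "commutator G (commutator G y z) a \<in> ?N"
      by (rule H_swap[OF K_carrier[OF a] commutator_closed[OF lower_central_K_carrier[OF y]
            lower_central_H_carrier[OF z]]])
  next
    fix a y z assume a: "a \<in> K" and y: "y \<in> lower_central G K i" and z: "z \<in> lower_central G H l"
    have "commutator G a z \<in> lower_central G H (Suc l)"
      by (rule commutator_K_lower_central_H[OF Suc.prems(1) a z])
    then have za: "commutator G z a \<in> lower_central G H (Suc l)"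
      by (rule H_swap[OF K_carrier[OF a] lower_central_H_carrier[OF z]])
    then have "commutator G y (commutator G z a) \<in> ?N" using Suc.IH[of "Suc l"] Suc.hyps y by simp
    then show "commutator G (commutator G z a) y \<in> ?N"
      by (rule H_swap[OF lower_central_K_carrier[OF y] lower_central_H_carrier[OF za]])
  qed
  moreover have "commutator G k x \<in> comm_sub G (comm_sub G K (lower_central G K i)) (lower_central G H l)"
    using commutator_in_comm_sub Suc.prems lower_central_Suc[OF Suc.hyps] by simp
  ultimately show ?case by auto
qed

lemma commutator_H_lower_central_K:
  assumes "1 \<le> i" "h \<in> H" "k \<in> lower_central G K i"
  shows "commutator G h k \<in> lower_central G H (Suc i)"
proof -
  have "commutator G k h \<in> lower_central G H (Suc i)"
    using commutator_lower_central_K_H[of i 1 k h] assms by simp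
  then show ?thesis
    by (rule commutator_swap_mem[OF lower_central_subgroup[OF H_subgroup]
          lower_central_K_carrier[OF assms(3)] H_carrier[OF assms(2)]])
qed

lemma commutator_set_mult_lower_central_H:
  assumes j: "1 \<le> j" and g: "g \<in> H <#> K" and x: "x \<in> lower_central G H j"
  shows "commutator G g x \<in> lower_central G H (Suc j)"
proof -
  obtain h k where hk: "h \<in> H" "k \<in> K" "g = h \<otimes> k" using g by (auto simp: mem_set_mult)
  have "h \<otimes> commutator G k x \<otimes> inv h \<in> lower_central G H (Suc j)"
    by (rule lower_central_conj_self[OF H_subgroup hk(1) commutator_K_lower_central_H[OF j hk(2) x]])
  moreover have "commutator G h x \<in> lower_central G H (Suc j)"
    by (rule commutator_lower_central(1)[OF H_subgroup j hk(1) x])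
  moreover have "commutator G g x = h \<otimes> commutator G k x \<otimes> inv h \<otimes> commutator G h x"
    using hk H_carrier K_carrier lower_central_H_carrier[OF x] by (simp add: commutator_def group_simps)
  ultimately show ?thesis using subgroup.m_closed[OF lower_central_subgroup[OF H_subgroup]] by simp
qed

lemma commutator_set_mult_lower_central:
  assumes j: "1 \<le> j" and g: "g \<in> H <#> K"
    and x: "x \<in> lower_central G H j" and y: "y \<in> lower_central G K j"
  shows "commutator G g (x \<otimes> y) \<in> lower_central G H (Suc j) <#> lower_central G K (Suc j)"
proof -
  interpret Q: normalizing_pair G "lower_central G H (Suc j)" "lower_central G K (Suc j)"
    by (rule normalizing_pair_lower_central)
  let ?Q = "lower_central G H (Suc j) <#> lower_central G K (Suc j)"
  have HQ: "a \<in> ?Q" if "a \<in> lower_central G H (Suc j)" for a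
    using that Q.H_subset_set_mult by blast
  note Q_mult = subgroup.m_closed[OF Q.set_mult_subgroup]
  obtain h k where hk: "h \<in> H" "k \<in> K" "g = h \<otimes> k" using g by (auto simp: mem_set_mult)
  have xH: "x \<in> H" using x lower_central_subset[OF H_subgroup] by blast
  let ?l = "commutator G k y"
  have l: "?l \<in> lower_central G K (Suc j)"
    by (rule commutator_lower_central(1)[OF K_subgroup j hk(2) y])
  then have l_j: "?l \<in> lower_central G K j" using lower_central_Suc_subset[OF K_subgroup] by blast
  have lQ: "?l \<in> ?Q" using l Q.K_subset_set_mult by blast
  have "commutator G g x \<in> ?Q"
    by (rule HQ[OF commutator_set_mult_lower_central_H[OF j g x]])
  moreover have "x \<otimes> commutator G h ?l \<otimes> inv x \<in> ?Q"
    by (rule HQ[OF lower_central_conj_self[OF H_subgroup xH commutator_H_lower_central_K[OF j hk(1) l_j]]])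
  moreover have "commutator G x ?l \<in> ?Q"
    by (rule HQ[OF commutator_H_lower_central_K[OF j xH l_j]])
  moreover have "x \<otimes> commutator G h y \<otimes> inv x \<in> ?Q"
    by (rule HQ[OF lower_central_conj_self[OF H_subgroup xH commutator_H_lower_central_K[OF j hk(1) y]]])
  ultimately have "commutator G g x \<otimes> ((x \<otimes> commutator G h ?l \<otimes> inv x) \<otimes> (commutator G x ?l \<otimes> ?l)
      \<otimes> (x \<otimes> commutator G h y \<otimes> inv x)) \<in> ?Q"
    using lQ by (metis Q_mult)
  moreover have "commutator G g (x \<otimes> y) = commutator G g x \<otimes> ((x \<otimes> commutator G h ?l \<otimes> inv x)
      \<otimes> (commutator G x ?l \<otimes> ?l) \<otimes> (x \<otimes> commutator G h y \<otimes> inv x))"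
    using hk H_carrier K_carrier lower_central_H_carrier[OF x] lower_central_K_carrier[OF y]
    by (simp add: commutator_def group_simps)
  ultimately show ?thesis by simp
qed

lemma set_mult_lower_central_subset:
  "lower_central G H j <#> lower_central G K j \<subseteq> lower_central G (H <#> K) j"
proof
  fix g assume "g \<in> lower_central G H j <#> lower_central G K j"
  then obtain x y where "x \<in> lower_central G H j" "y \<in> lower_central G K j" "g = x \<otimes> y"
    by (auto simp: set_mult_def)
  then show "g \<in> lower_central G (H <#> K) j"
    using lower_central_mono[OF H_subset_set_mult] lower_central_mono[OF K_subset_set_mult]
      subgroup.m_closed[OF lower_central_subgroup[OF set_mult_subgroup]] by blast
qed

theorem lower_central_set_mult:
  "1 \<le> j \<Longrightarrow> lower_central G (H <#> K) j = lower_central G H j <#> lower_central G K j"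
proof (induction j rule: nat_induct_at_least)
  case (Suc j)
  interpret Q: normalizing_pair G "lower_central G H (Suc j)" "lower_central G K (Suc j)"
    by (rule normalizing_pair_lower_central)
  have "lower_central G (H <#> K) (Suc j) = comm_sub G (H <#> K) (lower_central G H j <#> lower_central G K j)"
    using Suc by (simp add: lower_central_Suc)
  also have "\<dots> \<subseteq> lower_central G H (Suc j) <#> lower_central G K (Suc j)"
  proof (rule comm_sub_subset_subgroup[OF Q.set_mult_subgroup])
    fix g c assume g: "g \<in> H <#> K" and "c \<in> lower_central G H j <#> lower_central G K j"
    then obtain x y where "x \<in> lower_central G H j" "y \<in> lower_central G K j" "c = x \<otimes> y"
      by (auto simp: set_mult_def)
    then show "commutator G g c \<in> lower_central G H (Suc j) <#> lower_central G K (Suc j)"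
      using commutator_set_mult_lower_central[OF Suc.hyps g] by simp
  qed
  finally show ?case using set_mult_lower_central_subset by blast
qed simp

end

section \<open>The Andreadakis filtration\<close>

lemma AutoGroup_mult_apply:
  "\<sigma> \<in> carrier (AutoGroup G) \<Longrightarrow> \<tau> \<in> carrier (AutoGroup G) \<Longrightarrow> x \<in> carrier G
    \<Longrightarrow> (\<sigma> \<otimes>\<^bsub>AutoGroup G\<^esub> \<tau>) x = \<sigma> (\<tau> x)"
  by (simp add: AutoGroup_def BijGroup_def auto_def compose_def)

lemma AutoGroup_one_apply: "x \<in> carrier G \<Longrightarrow> \<one>\<^bsub>AutoGroup G\<^esub> x = x"
  by (simp add: AutoGroup_def BijGroup_def)

lemma AutoGroup_apply_closed: "\<sigma> \<in> carrier (AutoGroup G) \<Longrightarrow> x \<in> carrier G \<Longrightarrow> \<sigma> x \<in> carrier G"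
  by (auto simp: AutoGroup_def BijGroup_def auto_def hom_def)

lemma (in group) subgroup_AutoGroup_trivial_modulo:
  assumes L: "subgroup L G"
  shows "subgroup {\<sigma> \<in> carrier (AutoGroup G). \<forall>x \<in> carrier G. \<sigma> x \<otimes> inv x \<in> L} (AutoGroup G)"
proof (rule group.subgroupI[OF AutoGroup])
  show "{\<sigma> \<in> carrier (AutoGroup G). \<forall>x \<in> carrier G. \<sigma> x \<otimes> inv x \<in> L} \<noteq> {}"
    using AutoGroup_one_apply subgroup.one_closed[OF L] group.is_monoid[OF AutoGroup] by fastforce
next
  fix \<sigma> assume "\<sigma> \<in> {\<sigma> \<in> carrier (AutoGroup G). \<forall>x \<in> carrier G. \<sigma> x \<otimes> inv x \<in> L}"
  then have \<sigma>: "\<sigma> \<in> carrier (AutoGroup G)" "\<And>x. x \<in> carrier G \<Longrightarrow> \<sigma> x \<otimes> inv x \<in> L" by auto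
  let ?\<tau> = "inv\<^bsub>AutoGroup G\<^esub> \<sigma>"
  have \<tau>: "?\<tau> \<in> carrier (AutoGroup G)" by (rule group.inv_closed[OF AutoGroup \<sigma>(1)])
  have "?\<tau> x \<otimes> inv x \<in> L" if x: "x \<in> carrier G" for x
  proof -
    have \<tau>x: "?\<tau> x \<in> carrier G" by (rule AutoGroup_apply_closed[OF \<tau> x])
    have "\<sigma> (?\<tau> x) = x"
      using AutoGroup_mult_apply[OF \<sigma>(1) \<tau> x] group.r_inv[OF AutoGroup \<sigma>(1)] AutoGroup_one_apply[OF x] by simp
    then have "?\<tau> x \<otimes> inv x = inv (\<sigma> (?\<tau> x) \<otimes> inv (?\<tau> x))"
      using x \<tau>x by (simp add: group_simps)
    then show ?thesis using subgroup.m_inv_closed[OF L \<sigma>(2)[OF \<tau>x]] by simp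
  qed
  then show "?\<tau> \<in> {\<sigma> \<in> carrier (AutoGroup G). \<forall>x \<in> carrier G. \<sigma> x \<otimes> inv x \<in> L}" using \<tau> by blast
next
  fix \<sigma> \<tau>
  assume "\<sigma> \<in> {\<sigma> \<in> carrier (AutoGroup G). \<forall>x \<in> carrier G. \<sigma> x \<otimes> inv x \<in> L}"
    and "\<tau> \<in> {\<sigma> \<in> carrier (AutoGroup G). \<forall>x \<in> carrier G. \<sigma> x \<otimes> inv x \<in> L}"
  then have \<sigma>: "\<sigma> \<in> carrier (AutoGroup G)" "\<And>x. x \<in> carrier G \<Longrightarrow> \<sigma> x \<otimes> inv x \<in> L"
    and \<tau>: "\<tau> \<in> carrier (AutoGroup G)" "\<And>x. x \<in> carrier G \<Longrightarrow> \<tau> x \<otimes> inv x \<in> L" by auto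
  have "(\<sigma> \<otimes>\<^bsub>AutoGroup G\<^esub> \<tau>) x \<otimes> inv x \<in> L" if x: "x \<in> carrier G" for x
  proof -
    have \<tau>x: "\<tau> x \<in> carrier G" by (rule AutoGroup_apply_closed[OF \<tau>(1) x])
    have "(\<sigma> \<otimes>\<^bsub>AutoGroup G\<^esub> \<tau>) x \<otimes> inv x = (\<sigma> (\<tau> x) \<otimes> inv (\<tau> x)) \<otimes> (\<tau> x \<otimes> inv x)"
      using AutoGroup_mult_apply[OF \<sigma>(1) \<tau>(1) x] AutoGroup_apply_closed[OF \<sigma>(1) \<tau>x] x \<tau>x
      by (simp add: group_simps)
    then show ?thesis using subgroup.m_closed[OF L \<sigma>(2)[OF \<tau>x] \<tau>(2)[OF x]] by simp
  qed
  then show "\<sigma> \<otimes>\<^bsub>AutoGroup G\<^esub> \<tau> \<in> {\<sigma> \<in> carrier (AutoGroup G). \<forall>x \<in> carrier G. \<sigma> x \<otimes> inv x \<in> L}"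
    using group.is_monoid[OF AutoGroup] \<sigma>(1) \<tau>(1) by (simp add: monoid.m_closed)
qed auto

lemma group_AutF: "group (AutF n)"
  by (rule group.AutoGroup[OF group_free_group])

lemma andreadakis_subgroup: "subgroup (andreadakis n j) (AutF n)"
  unfolding andreadakis_def
  by (rule group.subgroup_AutoGroup_trivial_modulo[OF group_free_group
        group.lower_central_subgroup[OF group_free_group group.subgroup_self[OF group_free_group]]])

lemma andreadakis_Suc_subset: "andreadakis n (Suc j) \<subseteq> andreadakis n j"
  using group.lower_central_Suc_subset[OF group_free_group group.subgroup_self[OF group_free_group]]
  unfolding andreadakis_def by blast

theorem mainTheorem6:
  fixes n :: nat and H K :: "(fword \<Rightarrow> fword) set"
  assumes H_sub: "subgroup H (AutF n)" and H_IA: "H \<subseteq> IA n"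
      and K_sub: "subgroup K (AutF n)" and K_IA: "K \<subseteq> IA n"
      and triv: "H \<inter> K = {\<one>\<^bsub>AutF n\<^esub>}"
      and normalizes: "\<forall>k \<in> K. (\<lambda>h. k \<otimes>\<^bsub>AutF n\<^esub> h \<otimes>\<^bsub>AutF n\<^esub> inv\<^bsub>AutF n\<^esub> k) ` H = H"
      and almost_direct: "comm_sub (AutF n) K H \<subseteq> comm_sub (AutF n) H H"
      and johnson_disjoint: "\<forall>i \<ge> 1. \<forall>h \<in> andreadakis n i \<inter> H. \<forall>k \<in> andreadakis n i \<inter> K.
             inv\<^bsub>AutF n\<^esub> k \<otimes>\<^bsub>AutF n\<^esub> h \<in> andreadakis n (Suc i) \<longrightarrow> h \<in> andreadakis n (Suc i)"
      and andreadakis_H: "\<forall>j \<ge> 1. lower_central (AutF n) H j = andreadakis n j \<inter> H"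
      and andreadakis_K: "\<forall>j \<ge> 1. lower_central (AutF n) K j = andreadakis n j \<inter> K"
  shows "\<forall>j \<ge> 1. lower_central (AutF n) (H <#>\<^bsub>AutF n\<^esub> K) j
                   = andreadakis n j \<inter> (H <#>\<^bsub>AutF n\<^esub> K)"
proof -
  interpret almost_direct_product "AutF n" H K
  proof (intro almost_direct_product.intro normalizing_pair.intro normalizing_pair_axioms.intro
      almost_direct_product_axioms.intro group_AutF H_sub K_sub almost_direct)
    show "k \<otimes>\<^bsub>AutF n\<^esub> h \<otimes>\<^bsub>AutF n\<^esub> inv\<^bsub>AutF n\<^esub> k \<in> H" if "k \<in> K" "h \<in> H" for k h
      using normalizes that by blast
  qed
  have A_1: "H \<subseteq> andreadakis n 1" "K \<subseteq> andreadakis n 1"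
    using H_IA K_IA by (simp_all add: IA_def)
  have andreadakis_set_mult: "andreadakis n j \<inter> (H <#>\<^bsub>AutF n\<^esub> K)
      = (andreadakis n j \<inter> H) <#>\<^bsub>AutF n\<^esub> (andreadakis n j \<inter> K)" if "1 \<le> j" for j
    using johnson_disjoint
    by (intro filtration_inter_set_mult[OF andreadakis_subgroup andreadakis_Suc_subset A_1 _ that]) blast
  show ?thesis
  proof (intro allI impI)
    fix j :: nat assume j: "1 \<le> j"
    have "lower_central (AutF n) (H <#>\<^bsub>AutF n\<^esub> K) j
        = lower_central (AutF n) H j <#>\<^bsub>AutF n\<^esub> lower_central (AutF n) K j"
      by (rule lower_central_set_mult[OF j])
    also have "\<dots> = (andreadakis n j \<inter> H) <#>\<^bsub>AutF n\<^esub> (andreadakis n j \<inter> K)"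
      using andreadakis_H andreadakis_K j by simp
    also have "\<dots> = andreadakis n j \<inter> (H <#>\<^bsub>AutF n\<^esub> K)"
      by (rule andreadakis_set_mult[OF j, symmetric])
    finally show "lower_central (AutF n) (H <#>\<^bsub>AutF n\<^esub> K) j = andreadakis n j \<inter> (H <#>\<^bsub>AutF n\<^esub> K)" .
  qed
qed

end
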